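(* Let $n\ge 1$, $k=\lceil\log_2 n\rceil$, and let $G=(V,E)$ be the complete graph on $V=\{1,\ldots,n\}$. For $i\in V$ let $\mathbf i=(i_1,\ldots,i_k)\in\{0,1\}^k$ be the binary digits of $i-1$, i.e. $i-1=\sum_{t=1}^k i_t2^{t-1}$, and set $a_{ij}=(-1)^{\langle\mathbf i,\mathbf j\rangle}$ where $\langle\mathbf i,\mathbf j\rangle=\sum_{t=1}^k i_tj_t$. Then $\mu^+(V)\leqslant n^{3/2}/\sqrt2$ and $\mu^-(V)\geqslant -n^{3/2}/\sqrt2$.
   Context: For disjoint $U_1,U_2\subseteq V$, $\delta(U_1,U_2)$ is the set of edges with one endpoint in $U_1$ and one in $U_2$. $\mu^+(V)=\max\{\sum_{ij\in\delta(U_1,U_2)}a_{ij}:U_1\cup U_2=V,\ U_1\cap U_2=\emptyset\}$ and $\mu^-(V)$ is the corresponding minimum. *)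

theory Defs
  imports "HOL-Analysis.Analysis"
begin

definition nbits :: "nat \<Rightarrow> nat" where
  "nbits n = nat \<lceil>log 2 (real n)\<rceil>"

definition digit :: "nat \<Rightarrow> nat \<Rightarrow> nat" where
  "digit i t = ((i - 1) div 2 ^ (t - 1)) mod 2"

definition binip :: "nat \<Rightarrow> nat \<Rightarrow> nat \<Rightarrow> nat" where
  "binip k i j = (\<Sum>t=1..k. digit i t * digit j t)"

definition hadw :: "nat \<Rightarrow> nat \<Rightarrow> nat \<Rightarrow> real" where
  "hadw n i j = (-1) ^ binip (nbits n) i j"

definition complete_edges :: "nat set \<Rightarrow> nat set set" where
  "complete_edges V = {{i, j} | i j. i \<in> V \<and> j \<in> V \<and> i \<noteq> j}"

definition delta :: "nat set \<Rightarrow> nat set \<Rightarrow> nat set \<Rightarrow> nat set set" where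
  "delta V U1 U2 = {e \<in> complete_edges V. \<exists>i\<in>U1. \<exists>j\<in>U2. e = {i, j}}"

text \<open>Weight of an edge {i,j}; a_ij is symmetric.\<close>
definition edge_weight :: "nat \<Rightarrow> nat set \<Rightarrow> real" where
  "edge_weight n e = (THE w. \<exists>i j. e = {i, j} \<and> i \<noteq> j \<and> w = hadw n i j)"

definition cut_values :: "nat \<Rightarrow> real set" where
  "cut_values n = {(\<Sum>e\<in>delta {1..n} U1 U2. edge_weight n e) | U1 U2.
      U1 \<union> U2 = {1..n} \<and> U1 \<inter> U2 = {}}"

definition mu_plus :: "nat \<Rightarrow> real" where
  "mu_plus n = Max (cut_values n)"

definition mu_minus :: "nat \<Rightarrow> real" where
  "mu_minus n = Min (cut_values n)"

end

theory Submission
  imports Defs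
begin

text \<open>
  The weight matrix \<open>(a\<^sub>i\<^sub>j)\<close> is a submatrix of the \<open>2\<^sup>k \<times> 2\<^sup>k\<close> Sylvester--Hadamard matrix
  \<open>H\<close>, whose rows are pairwise orthogonal. The weight of the cut \<open>(U\<^sub>1, U\<^sub>2)\<close> is the sum of
  the \<open>U\<^sub>1 \<times> U\<^sub>2\<close> block of \<open>H\<close>; by Cauchy--Schwarz over the columns and orthogonality of
  the rows its square is at most \<open>|U\<^sub>1| |U\<^sub>2| 2\<^sup>k\<close> (Lindsey's lemma). Since
  \<open>|U\<^sub>1| |U\<^sub>2| \<le> n\<^sup>2/4\<close> and \<open>2\<^sup>k \<le> 2n\<close>, every cut has absolute weight at most \<open>\<surd>(n\<^sup>3/2)\<close>.
\<close>

primrec bit_inner :: "nat \<Rightarrow> nat \<Rightarrow> nat \<Rightarrow> nat" where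
  "bit_inner 0 a b = 0"
| "bit_inner (Suc k) a b = (a mod 2) * (b mod 2) + bit_inner k (a div 2) (b div 2)"

lemma bit_inner_eq_sum:
  "bit_inner k a b = (\<Sum>t<k. (a div 2 ^ t mod 2) * (b div 2 ^ t mod 2))"
  by (induction k arbitrary: a b)
    (simp_all del: sum.lessThan_Suc add: sum.lessThan_Suc_shift div_mult2_eq)

lemma binip_eq_bit_inner: "binip k i j = bit_inner k (i - 1) (j - 1)"
  unfolding binip_def digit_def bit_inner_eq_sum
  by (induction k) (simp_all add: lessThan_Suc)

definition hadamard :: "nat \<Rightarrow> nat \<Rightarrow> nat \<Rightarrow> real" where
  "hadamard k a b = (-1) ^ bit_inner k a b"

lemma hadw_eq_hadamard: "hadw n i j = hadamard (nbits n) (i - 1) (j - 1)"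
  by (simp add: hadw_def hadamard_def binip_eq_bit_inner)

lemma hadamard_Suc_even: "hadamard (Suc k) a (2 * j) = hadamard k (a div 2) j"
  by (simp add: hadamard_def)

lemma hadamard_Suc_odd: "hadamard (Suc k) a (2 * j + 1) = (-1) ^ (a mod 2) * hadamard k (a div 2) j"
  by (simp add: hadamard_def power_add)

lemma sum_lessThan_double:
  fixes f :: "nat \<Rightarrow> 'a::comm_monoid_add"
  shows "(\<Sum>j<2 * m. f j) = (\<Sum>j<m. f (2 * j) + f (2 * j + 1))"
  by (induction m) (simp_all add: sum.distrib ac_simps)

lemma hadamard_orthogonal:
  assumes "a < 2 ^ k" "b < 2 ^ k"
  shows "(\<Sum>j<2 ^ k. hadamard k a j * hadamard k b j) = (if a = b then 2 ^ k else 0)"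
  using assms
proof (induction k arbitrary: a b)
  case 0
  then show ?case by (simp add: hadamard_def)
next
  case (Suc k)
  define s :: real where "s = 1 + (-1) ^ (a mod 2) * (-1) ^ (b mod 2)"
  have "(\<Sum>j<2 ^ Suc k. hadamard (Suc k) a j * hadamard (Suc k) b j)
      = (\<Sum>j<2 ^ k. hadamard (Suc k) a (2 * j) * hadamard (Suc k) b (2 * j)
                       + hadamard (Suc k) a (2 * j + 1) * hadamard (Suc k) b (2 * j + 1))"
    by (simp add: sum_lessThan_double)
  also have "\<dots> = (\<Sum>j<2 ^ k. s * (hadamard k (a div 2) j * hadamard k (b div 2) j))"
    unfolding hadamard_Suc_even hadamard_Suc_odd s_def by (simp add: algebra_simps)
  also have "\<dots> = s * (if a div 2 = b div 2 then 2 ^ k else 0)"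
    using Suc by (simp add: sum_distrib_left[symmetric])
  also have "\<dots> = (if a = b then 2 ^ Suc k else 0)"
  proof (cases "a mod 2 = b mod 2")
    case True
    then have "s = 2" by (simp add: s_def flip: power_add)
    moreover have "a = b \<longleftrightarrow> a div 2 = b div 2"
      using True by (metis div_mult_mod_eq)
    ultimately show ?thesis by simp
  next
    case False
    then have "s = 0" by (auto simp: s_def mod2_eq_if split: if_splits)
    with False show ?thesis by auto
  qed
  finally show ?case .
qed

lemma hadamard_block_sum_sq_le:
  assumes A: "A \<subseteq> {..<2 ^ k}" and B: "B \<subseteq> {..<2 ^ k}"
  shows "(\<Sum>a\<in>A. \<Sum>b\<in>B. hadamard k a b)\<^sup>2 \<le> real (card A) * card B * 2 ^ k"
proof -
  define c where "c b = (\<Sum>a\<in>A. hadamard k a b)" for b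
  have column_norm: "(\<Sum>b<2 ^ k. (c b)\<^sup>2) = real (card A) * 2 ^ k"
  proof -
    have "(\<Sum>b<2 ^ k. (c b)\<^sup>2) = (\<Sum>a\<in>A. \<Sum>a'\<in>A. \<Sum>b<2 ^ k. hadamard k a b * hadamard k a' b)"
      unfolding c_def power2_eq_square sum_product
      by (subst sum.swap) (simp add: sum.swap[of _ "{..<2 ^ k}"])
    also have "\<dots> = (\<Sum>a\<in>A. \<Sum>a'\<in>A. if a = a' then 2 ^ k else 0)"
      using A by (intro sum.cong refl hadamard_orthogonal) auto
    also have "\<dots> = real (card A) * 2 ^ k"
      using finite_subset[OF A] by simp
    finally show ?thesis .
  qed
  have "(\<Sum>a\<in>A. \<Sum>b\<in>B. hadamard k a b)\<^sup>2 = (\<Sum>b\<in>B. c b)\<^sup>2"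
    unfolding c_def by (simp add: sum.swap[of _ A])
  also have "\<dots> \<le> (\<Sum>b\<in>B. (c b)\<^sup>2) * card B"
    by (rule sum_squared_le_sum_of_squares)
  also have "\<dots> \<le> (\<Sum>b<2 ^ k. (c b)\<^sup>2) * card B"
    using B by (intro mult_right_mono sum_mono2) auto
  finally show ?thesis
    by (simp add: column_norm algebra_simps)
qed

lemma edge_weight_doubleton: "i \<noteq> j \<Longrightarrow> edge_weight n {i, j} = hadw n i j"
  unfolding edge_weight_def
  by (rule the_equality) (auto simp: doubleton_eq_iff hadw_def binip_def mult.commute)

lemma delta_eq_image:
  assumes "U1 \<subseteq> V" "U2 \<subseteq> V" "U1 \<inter> U2 = {}"
  shows "delta V U1 U2 = (\<lambda>(i, j). {i, j}) ` (U1 \<times> U2)"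
  using assms unfolding delta_def complete_edges_def by (auto 4 4)

lemma cut_weight_eq_double_sum:
  assumes "U1 \<subseteq> V" "U2 \<subseteq> V" "U1 \<inter> U2 = {}"
  shows "(\<Sum>e\<in>delta V U1 U2. edge_weight n e) = (\<Sum>i\<in>U1. \<Sum>j\<in>U2. hadw n i j)"
proof -
  have "inj_on (\<lambda>(i, j). {i, j}) (U1 \<times> U2)"
    using assms(3) by (auto simp: inj_on_def doubleton_eq_iff)
  then have "(\<Sum>e\<in>delta V U1 U2. edge_weight n e) = (\<Sum>(i, j)\<in>U1 \<times> U2. edge_weight n {i, j})"
    by (simp add: delta_eq_image[OF assms] sum.reindex case_prod_beta')
  also have "\<dots> = (\<Sum>(i, j)\<in>U1 \<times> U2. hadw n i j)"
    using assms(3) by (intro sum.cong) (auto intro!: edge_weight_doubleton)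
  finally show ?thesis
    by (simp add: sum.cartesian_product)
qed

lemma nbits_bounds:
  assumes "n \<ge> 1"
  shows "n \<le> 2 ^ nbits n" "2 ^ nbits n \<le> 2 * real n"
proof -
  define L where "L = log 2 (real n)"
  have n_eq: "real n = 2 powr L" and "L \<ge> 0"
    using assms by (simp_all add: L_def)
  then have k_eq: "real (nbits n) = of_int \<lceil>L\<rceil>"
    by (simp add: nbits_def L_def)
  have pow_eq: "(2::real) ^ nbits n = 2 powr real (nbits n)"
    by (simp add: powr_realpow)
  have "2 powr L \<le> 2 powr real (nbits n)"
    using k_eq by (simp add: le_of_int_ceiling)
  then have "real n \<le> 2 ^ nbits n"
    using pow_eq n_eq by simp
  then show "n \<le> 2 ^ nbits n"
    by (metis of_nat_le_iff of_nat_numeral of_nat_power)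
  have "2 powr real (nbits n) \<le> 2 powr (L + 1)"
    using k_eq by simp
  also have "\<dots> = 2 * real n"
    using n_eq by (simp add: powr_add)
  finally show "2 ^ nbits n \<le> 2 * real n"
    using pow_eq by simp
qed

lemma cut_weight_sq_le:
  assumes "U1 \<subseteq> {1..n}" "U2 \<subseteq> {1..n}" "U1 \<inter> U2 = {}" "n \<le> 2 ^ nbits n"
  shows "(\<Sum>e\<in>delta {1..n} U1 U2. edge_weight n e)\<^sup>2 \<le> real (card U1) * card U2 * 2 ^ nbits n"
proof -
  have inj: "inj_on (\<lambda>i. i - 1) U" if "U \<subseteq> {1..n}" for U
    using that by (intro inj_on_diff_nat) auto
  have shift: "(\<lambda>i. i - 1) ` U \<subseteq> {..<2 ^ nbits n}" if "U \<subseteq> {1..n}" for U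
    using that assms(4) by (force simp: subset_iff)
  have "(\<Sum>e\<in>delta {1..n} U1 U2. edge_weight n e)
      = (\<Sum>a\<in>(\<lambda>i. i - 1) ` U1. \<Sum>b\<in>(\<lambda>i. i - 1) ` U2. hadamard (nbits n) a b)"
    using assms(1-3) inj by (simp add: cut_weight_eq_double_sum hadw_eq_hadamard sum.reindex)
  moreover have "card ((\<lambda>i. i - 1) ` U1) = card U1" "card ((\<lambda>i. i - 1) ` U2) = card U2"
    using assms(1,2) inj by (simp_all add: card_image)
  ultimately show ?thesis
    using hadamard_block_sum_sq_le[OF shift[OF assms(1)] shift[OF assms(2)]] by simp
qed

lemma cut_weight_abs_le:
  assumes "n \<ge> 1" "U1 \<union> U2 = {1..n}" "U1 \<inter> U2 = {}"
  shows "\<bar>\<Sum>e\<in>delta {1..n} U1 U2. edge_weight n e\<bar> \<le> real n powr (3/2) / sqrt 2"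
proof -
  define p q where "p = real (card U1)" and "q = real (card U2)"
  have "finite U1" "finite U2"
    using assms(2) by (metis finite_Un finite_atLeastAtMost)+
  then have "p + q = n"
    using card_Un_disjoint[of U1 U2] assms(2,3) by (simp add: p_def q_def flip: of_nat_add)
  moreover have "4 * (p * q) \<le> (p + q)\<^sup>2"
    using zero_le_power2[of "p - q"] by (simp add: power2_eq_square algebra_simps)
  ultimately have "p * q \<le> real n ^ 2 / 4"
    by simp
  have "U1 \<subseteq> {1..n}" "U2 \<subseteq> {1..n}"
    using assms(2) by auto
  then have "(\<Sum>e\<in>delta {1..n} U1 U2. edge_weight n e)\<^sup>2 \<le> p * q * 2 ^ nbits n"
    unfolding p_def q_def using cut_weight_sq_le assms(3) nbits_bounds(1)[OF assms(1)] by blast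
  also have "\<dots> \<le> (real n ^ 2 / 4) * (2 * real n)"
    using \<open>p * q \<le> real n ^ 2 / 4\<close> nbits_bounds(2)[OF assms(1)]
    by (intro mult_mono) (simp_all add: p_def q_def)
  also have "\<dots> = real n ^ 3 / 2"
    by (simp add: power2_eq_square power3_eq_cube)
  finally have "\<bar>\<Sum>e\<in>delta {1..n} U1 U2. edge_weight n e\<bar> \<le> sqrt (real n ^ 3 / 2)"
    by (intro real_le_rsqrt) simp
  also have "\<dots> = real n powr (3/2) / sqrt 2"
    using assms(1) by (simp add: powr_half_sqrt_powr powr_numeral real_sqrt_divide)
  finally show ?thesis .
qed

theorem lemma2:
  fixes n :: nat
  assumes "n \<ge> 1"
  shows "mu_plus n \<le> real n powr (3/2) / sqrt 2 \<and> mu_minus n \<ge> - (real n powr (3/2) / sqrt 2)"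
proof -
  have "cut_values n \<subseteq> (\<lambda>U1. \<Sum>e\<in>delta {1..n} U1 ({1..n} - U1). edge_weight n e) ` Pow {1..n}"
  proof
    fix v assume "v \<in> cut_values n"
    then obtain U1 U2 where "v = (\<Sum>e\<in>delta {1..n} U1 U2. edge_weight n e)"
      "U1 \<union> U2 = {1..n}" "U1 \<inter> U2 = {}"
      unfolding cut_values_def by blast
    moreover from this have "U2 = {1..n} - U1" by blast
    ultimately show "v \<in> (\<lambda>U1. \<Sum>e\<in>delta {1..n} U1 ({1..n} - U1). edge_weight n e) ` Pow {1..n}"
      by blast
  qed
  then have "finite (cut_values n)"
    by (rule finite_subset) simp
  moreover have "cut_values n \<noteq> {}"
    unfolding cut_values_def by blast
  ultimately have "mu_plus n \<in> cut_values n" "mu_minus n \<in> cut_values n"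
    unfolding mu_plus_def mu_minus_def by auto
  moreover have "\<bar>v\<bar> \<le> real n powr (3/2) / sqrt 2" if "v \<in> cut_values n" for v
    using that cut_weight_abs_le[OF assms] unfolding cut_values_def by blast
  ultimately show ?thesis
    by fastforce
qed

end
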